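(* Let $K$ be a field of characteristic $0$ such that $K_{\mathrm{ab}}/\mathbb{Q}$ has finite degree, let $\lambda$ be the number of roots of unity in $K$, and let $p$ be a prime with $p\nmid\lambda$. Then for every positive integer $n$, $$H^1(G_n,\mu_{p^{\operatorname{ord}_p(n)}})=0.$$
   Context: $K_{\mathrm{ab}}$ is the maximal abelian subextension of $K/\mathbb{Q}$. $\mu_m$ is the Galois module of $m$th roots of unity, $\zeta_n$ a primitive $n$th root of unity, $G_n:=\mathrm{Gal}(K(\zeta_n)/K)$ acting naturally on roots of unity. *)

theory Defs
  imports "HOL-Computational_Algebra.Computational_Algebra"
begin

text \<open>All fields are subfields of an ambient field of type 'a (assumed algebraically closed
in the theorem). Field elements of characteristic 0.\<close>

definition is_subfield :: "'a::field set \<Rightarrow> bool" where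
  "is_subfield F \<longleftrightarrow> 0 \<in> F \<and> 1 \<in> F \<and>
     (\<forall>x\<in>F. \<forall>y\<in>F. x + y \<in> F \<and> x * y \<in> F) \<and>
     (\<forall>x\<in>F. - x \<in> F \<and> inverse x \<in> F)"

definition gen_field :: "'a::field set \<Rightarrow> 'a set" where
  "gen_field S = \<Inter> {F. is_subfield F \<and> S \<subseteq> F}"

text \<open>Aut(E/F): field automorphisms of E fixing F pointwise (extended by the identity
outside E, so that they form a group of functions under composition).\<close>
definition field_auts :: "'a::field set \<Rightarrow> 'a set \<Rightarrow> ('a \<Rightarrow> 'a) set" where
  "field_auts E F = {\<sigma>. bij_betw \<sigma> E E \<and>
      (\<forall>x\<in>E. \<forall>y\<in>E. \<sigma> (x + y) = \<sigma> x + \<sigma> y \<and> \<sigma> (x * y) = \<sigma> x * \<sigma> y) \<and>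
      (\<forall>x\<in>F. \<sigma> x = x) \<and> (\<forall>x. x \<notin> E \<longrightarrow> \<sigma> x = x)}"

definition rat_span :: "'a::field_char_0 set \<Rightarrow> 'a set" where
  "rat_span B = {(\<Sum>b\<in>B. of_rat (c b) * b) | c. True}"

definition finite_over_Q :: "'a::field_char_0 set \<Rightarrow> bool" where
  "finite_over_Q F \<longleftrightarrow> (\<exists>B. finite B \<and> B \<subseteq> F \<and> F \<subseteq> rat_span B)"

text \<open>F is a finite abelian Galois extension of Q (Galois: fixed field of Aut(F/Q) is Q).\<close>
definition abelian_over_Q :: "'a::field_char_0 set \<Rightarrow> bool" where
  "abelian_over_Q F \<longleftrightarrow> is_subfield F \<and> finite_over_Q F \<and>
     {x \<in> F. \<forall>\<sigma>\<in>field_auts F \<rat>. \<sigma> x = x} = \<rat> \<and>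
     (\<forall>\<sigma>\<in>field_auts F \<rat>. \<forall>\<tau>\<in>field_auts F \<rat>. \<sigma> \<circ> \<tau> = \<tau> \<circ> \<sigma>)"

definition K_ab :: "'a::field_char_0 set \<Rightarrow> 'a set" where
  "K_ab K = gen_field (\<Union> {F. abelian_over_Q F \<and> F \<subseteq> K})"

definition roots_of_unity :: "'a::field set \<Rightarrow> 'a set" where
  "roots_of_unity S = {x \<in> S. \<exists>m>0. x ^ m = 1}"

definition mu :: "nat \<Rightarrow> 'a::field set" where
  "mu m = {x. x ^ m = 1}"

definition prim_root :: "nat \<Rightarrow> 'a::field" where
  "prim_root n = (SOME z. z ^ n = 1 \<and> (\<forall>m. 0 < m \<and> m < n \<longrightarrow> z ^ m \<noteq> 1))"

definition Gal_n :: "'a::field set \<Rightarrow> nat \<Rightarrow> ('a \<Rightarrow> 'a) set" where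
  "Gal_n K n = field_auts (gen_field (insert (prim_root n) K)) K"

text \<open>H^1(G, M) = 0 for a group G of automorphisms acting naturally on a multiplicative
module M: every 1-cocycle (crossed homomorphism) is a coboundary.\<close>
definition H1_zero :: "('a \<Rightarrow> 'a) set \<Rightarrow> 'a::field set \<Rightarrow> bool" where
  "H1_zero G M \<longleftrightarrow> (\<forall>f. ((\<forall>\<sigma>\<in>G. f \<sigma> \<in> M) \<and>
        (\<forall>\<sigma>\<in>G. \<forall>\<tau>\<in>G. f (\<sigma> \<circ> \<tau>) = f \<sigma> * \<sigma> (f \<tau>)))
      \<longrightarrow> (\<exists>m\<in>M. \<forall>\<sigma>\<in>G. f \<sigma> = \<sigma> m / m))"

end

theory Submission
  imports Defs "HOL-Number_Theory.Cong"
begin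

text \<open>
  Let z be a primitive n-th root of unity. Then G_n is the automorphism group of the simple
  extension K[z] over K; each of its elements is determined by the image of z, a power z^b,
  so G_n acts on mu_n through exponents and is abelian.

  If p divides n, the primitive p-th root of unity w = z^(n/p) does not lie in K, for mu_p acts
  freely on the roots of unity of K and p does not divide their number. Hence some conjugate
  of z moves w: otherwise the remainder of X^(n/p) modulo the separable minimal polynomial f of z
  would take the value w at the deg f roots of f, hence be the constant w, which would then lie
  in K. The automorphism sending z to that conjugate acts on mu_(p^k) as x \<mapsto> x^a with a - 1 prime
  to p.

  By Sah's lemma such a central element kills the first cohomology: comparing a cocycle h on
  \<sigma>\<tau> and \<tau>\<sigma> gives h(\<tau>)^(a-1) = \<tau>(s)/s for s = h(\<sigma>), so h is
  the coboundary of s^c, where c inverts a - 1 modulo p^k. If p does not divide n the module is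
  trivial.
\<close>

section \<open>Subfields and their automorphisms\<close>

lemma subfield_zero: "is_subfield K \<Longrightarrow> 0 \<in> K"
  and subfield_one: "is_subfield K \<Longrightarrow> 1 \<in> K"
  and subfield_add: "is_subfield K \<Longrightarrow> x \<in> K \<Longrightarrow> y \<in> K \<Longrightarrow> x + y \<in> K"
  and subfield_mult: "is_subfield K \<Longrightarrow> x \<in> K \<Longrightarrow> y \<in> K \<Longrightarrow> x * y \<in> K"
  and subfield_uminus: "is_subfield K \<Longrightarrow> x \<in> K \<Longrightarrow> - x \<in> K"
  and subfield_inverse: "is_subfield K \<Longrightarrow> x \<in> K \<Longrightarrow> inverse x \<in> K"
  by (simp_all add: is_subfield_def)

lemma subfield_diff: "is_subfield K \<Longrightarrow> x \<in> K \<Longrightarrow> y \<in> K \<Longrightarrow> x - y \<in> K"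
  using subfield_add[of K x "- y"] subfield_uminus[of K y] by simp

lemma subfield_divide: "is_subfield K \<Longrightarrow> x \<in> K \<Longrightarrow> y \<in> K \<Longrightarrow> x / y \<in> K"
  using subfield_mult[of K x "inverse y"] subfield_inverse[of K y] by (simp add: divide_inverse)

lemma subfield_power: "is_subfield K \<Longrightarrow> x \<in> K \<Longrightarrow> x ^ n \<in> K"
  by (induction n) (auto intro: subfield_one subfield_mult)

lemma subfield_sum: "is_subfield K \<Longrightarrow> (\<And>i. i \<in> A \<Longrightarrow> f i \<in> K) \<Longrightarrow> sum f A \<in> K"
  by (induction A rule: infinite_finite_induct) (auto intro: subfield_zero subfield_add)

lemma gen_field_subfield: "is_subfield (gen_field S)"
  unfolding gen_field_def is_subfield_def by auto

lemma gen_field_superset: "S \<subseteq> gen_field S"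
  unfolding gen_field_def by auto

lemma gen_field_least: "is_subfield F \<Longrightarrow> S \<subseteq> F \<Longrightarrow> gen_field S \<subseteq> F"
  unfolding gen_field_def by auto

lemma field_auts_closed: "\<sigma> \<in> field_auts E F \<Longrightarrow> x \<in> E \<Longrightarrow> \<sigma> x \<in> E"
  and field_auts_add: "\<sigma> \<in> field_auts E F \<Longrightarrow> x \<in> E \<Longrightarrow> y \<in> E \<Longrightarrow> \<sigma> (x + y) = \<sigma> x + \<sigma> y"
  and field_auts_mult: "\<sigma> \<in> field_auts E F \<Longrightarrow> x \<in> E \<Longrightarrow> y \<in> E \<Longrightarrow> \<sigma> (x * y) = \<sigma> x * \<sigma> y"
  and field_auts_fixed: "\<sigma> \<in> field_auts E F \<Longrightarrow> c \<in> F \<Longrightarrow> \<sigma> c = c"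
  and field_auts_outside: "\<sigma> \<in> field_auts E F \<Longrightarrow> x \<notin> E \<Longrightarrow> \<sigma> x = x"
  unfolding field_auts_def bij_betw_def by auto

lemma id_in_field_auts: "id \<in> field_auts E F"
  unfolding field_auts_def by simp

lemma field_auts_comp:
  assumes "\<sigma> \<in> field_auts E F" "\<tau> \<in> field_auts E F"
  shows "\<sigma> \<circ> \<tau> \<in> field_auts E F"
proof -
  have "bij_betw (\<sigma> \<circ> \<tau>) E E"
    using assms bij_betw_trans unfolding field_auts_def by blast
  then show ?thesis
    using assms field_auts_closed[OF assms(2)] unfolding field_auts_def by simp
qed

lemma field_auts_power:
  assumes "\<sigma> \<in> field_auts E F" "is_subfield E" "1 \<in> F" "x \<in> E"
  shows "\<sigma> (x ^ j) = \<sigma> x ^ j"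
proof (induction j)
  case 0
  then show ?case using field_auts_fixed assms by simp
next
  case (Suc j)
  then show ?case
    using field_auts_mult[OF assms(1,4) subfield_power[OF assms(2,4)]] by simp
qed

section \<open>Roots of unity\<close>

definition is_primitive_root :: "nat \<Rightarrow> 'a::field \<Rightarrow> bool" where
  "is_primitive_root n z \<longleftrightarrow> (\<forall>j. z ^ j = 1 \<longleftrightarrow> n dvd j)"

lemma power_eq_power_mod: "(z::'a::monoid_mult) ^ n = 1 \<Longrightarrow> z ^ j = z ^ (j mod n)"
  by (metis div_mult_mod_eq power_add power_mult power_one mult_1 mult.commute)

lemma mu_power_closed:
  assumes "x \<in> mu N"
  shows "x ^ c \<in> mu N"
proof -
  have "(x ^ c) ^ N = (x ^ N) ^ c"
    by (simp add: mult.commute flip: power_mult)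
  then show ?thesis
    using assms unfolding mu_def by simp
qed

lemma mu_subset_of_dvd: "m dvd n \<Longrightarrow> mu m \<subseteq> mu n"
  unfolding mu_def by (auto elim!: dvdE simp: power_mult)

lemma mu_eq_roots: "mu n = {x. poly (monom 1 n - 1) x = 0}"
  by (simp add: mu_def poly_monom)

lemma degree_X_power_minus_1: "0 < n \<Longrightarrow> degree (monom (1::'a::field) n - 1) = n"
  using degree_add_eq_left[of "-1" "monom (1::'a) n"] by (simp add: degree_monom_eq)

lemma X_power_minus_1_nonzero:
  assumes "0 < n"
  shows "monom (1::'a::field) n - 1 \<noteq> 0"
  using degree_X_power_minus_1[OF assms] assms by (metis degree_0 less_irrefl)

lemma finite_mu: "0 < n \<Longrightarrow> finite (mu n :: 'a::field set)"
  unfolding mu_eq_roots using X_power_minus_1_nonzero by (rule poly_roots_finite)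

lemma card_mu_le: "0 < n \<Longrightarrow> card (mu n :: 'a::field set) \<le> n"
  unfolding mu_eq_roots
  using card_poly_roots_bound[OF X_power_minus_1_nonzero] degree_X_power_minus_1 by metis

lemma is_primitive_root_inj:
  assumes z: "is_primitive_root n z"
  shows "inj_on (\<lambda>j. z ^ j) {..<n}"
proof -
  have "z ^ i \<noteq> z ^ j" if ij: "i < j" "j < n" for i j
  proof
    assume eq: "z ^ i = z ^ j"
    have "z ^ n = 1"
      using z unfolding is_primitive_root_def by simp
    then have "z \<noteq> 0"
      using ij by (metis less_nat_zero_code linorder_neqE_nat power_0_left zero_neq_one)
    then have "z ^ (j - i) = 1"
      using eq ij by (metis add_diff_inverse_nat less_imp_le_nat not_le mult_cancel_left1 power_add power_not_zero)
    then have "n dvd j - i"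
      using z unfolding is_primitive_root_def by simp
    then show False
      using ij by (metis diff_le_self le_trans nat_dvd_not_less not_le zero_less_diff)
  qed
  then show ?thesis
    unfolding inj_on_def by (metis lessThan_iff linorder_neqE_nat)
qed

lemma mu_eq_powers:
  assumes z: "is_primitive_root n z" and n: "0 < n"
  shows "mu n = (\<lambda>j. z ^ j) ` {..<n}"
proof -
  have "(\<lambda>j. z ^ j) ` {..<n} \<subseteq> mu n"
    using z unfolding is_primitive_root_def mu_def by (auto simp flip: power_mult simp: mult.commute)
  moreover have "card ((\<lambda>j. z ^ j) ` {..<n}) = n"
    using card_image[OF is_primitive_root_inj[OF z]] by simp
  ultimately show ?thesis
    using card_subset_eq[OF finite_mu[OF n]] card_mu_le[OF n] by (metis card_mono finite_mu[OF n] le_antisym)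
qed

lemma card_mu_primitive_root:
  fixes z :: "'a::field"
  assumes "is_primitive_root n z" "0 < n"
  shows "card (mu n :: 'a set) = n"
  using card_image[OF is_primitive_root_inj[OF assms(1)]] mu_eq_powers[OF assms] by simp

lemma is_primitive_root_mult:
  fixes x y :: "'a::field"
  assumes x: "is_primitive_root a x" and y: "is_primitive_root b y" and ab: "coprime a b"
  shows "is_primitive_root (a * b) (x * y)"
  unfolding is_primitive_root_def
proof (intro allI iffI)
  fix j assume xy: "(x * y) ^ j = 1"
  have "x ^ (j * b) = ((x * y) ^ j) ^ b" "y ^ (j * a) = ((x * y) ^ j) ^ a"
    using x y unfolding is_primitive_root_def
    by (simp_all add: power_mult_distrib flip: power_mult)
  then have "a dvd j * b" "b dvd j * a"
    using x y xy unfolding is_primitive_root_def by simp_all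
  then show "a * b dvd j"
    using ab by (simp add: coprime_dvd_mult_left_iff coprime_commute divides_mult)
next
  fix j assume "a * b dvd j"
  then have "a dvd j" "b dvd j"
    by (auto intro: dvd_mult_left dvd_mult_right)
  then show "(x * y) ^ j = 1"
    using x y unfolding is_primitive_root_def by (metis mult_1 power_mult_distrib)
qed

lemma rsquarefree_X_power_minus_1:
  assumes "0 < n"
  shows "rsquarefree (monom (1::'a::field_char_0) n - 1)"
  unfolding rsquarefree_roots
proof (intro allI notI)
  fix x :: 'a
  assume "poly (monom 1 n - 1) x = 0 \<and> poly (pderiv (monom 1 n - 1)) x = 0"
  then have "x ^ n = 1" "of_nat n * x ^ (n - 1) = 0"
    by (simp_all add: poly_monom pderiv_diff pderiv_monom)
  then show False
    using assms by (cases "x = 0") (auto simp: power_0_left)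
qed

lemma rsquarefree_dvd: "rsquarefree p \<Longrightarrow> f dvd p \<Longrightarrow> rsquarefree f"
  unfolding rsquarefree_def
  by (metis dvd_0_left dvd_imp_order_le le_0_eq le_Suc_eq One_nat_def)

lemma card_roots_rsquarefree:
  fixes f :: "'a::field poly"
  assumes alg_closed: "\<forall>q :: 'a poly. degree q > 0 \<longrightarrow> (\<exists>x. poly q x = 0)"
    and "rsquarefree f"
  shows "card {x. poly f x = 0} = degree f"
  using assms(2)
proof (induction "degree f" arbitrary: f rule: less_induct)
  case less
  have f0: "f \<noteq> 0"
    using less.prems by (simp add: rsquarefree_def)
  show ?case
  proof (cases "degree f = 0")
    case True
    then obtain c where "f = [:c:]"
      by (metis degree_0_id)
    then show ?thesis
      using f0 True by simp
  next
    case False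
    then obtain c where "poly f c = 0"
      using alg_closed by auto
    then obtain g where g: "f = [:-c, 1:] * g"
      by (metis dvdE dvd_iff_poly_eq_0 minus_minus)
    have g0: "g \<noteq> 0"
      using g f0 by auto
    then have deg: "degree f = Suc (degree g)"
      using g degree_mult_eq[of "[:-c, 1:]" g] by simp
    have "rsquarefree g"
      using rsquarefree_dvd[OF less.prems] g by (metis dvd_triv_right)
    have "order c f = Suc (order c g)"
      using g f0 order_mult[of "[:-c, 1:]" g c] order_power_n_n[of c 1] by simp
    moreover have "order c f \<le> 1"
      using less.prems unfolding rsquarefree_def by (metis le_refl zero_le)
    ultimately have "poly g c \<noteq> 0"
      using g0 by (simp add: order_root)
    moreover have "{x. poly f x = 0} = insert c {x. poly g x = 0}"
      using g by auto
    ultimately show ?thesis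
      using less.hyps[OF _ \<open>rsquarefree g\<close>] deg poly_roots_finite[OF g0] by simp
  qed
qed

lemma card_mu:
  assumes alg_closed: "\<forall>q :: 'a::field_char_0 poly. degree q > 0 \<longrightarrow> (\<exists>x. poly q x = 0)"
    and "0 < n"
  shows "card (mu n :: 'a set) = n"
  using card_roots_rsquarefree[OF alg_closed rsquarefree_X_power_minus_1] degree_X_power_minus_1 assms(2)
  unfolding mu_eq_roots by metis

lemma primitive_root_prime_power_exists:
  fixes q e :: nat
  assumes alg_closed: "\<forall>q :: 'a::field_char_0 poly. degree q > 0 \<longrightarrow> (\<exists>x. poly q x = 0)"
    and q: "prime q" and e: "0 < e"
  shows "\<exists>z::'a. is_primitive_root (q ^ e) z"
proof -
  have q1: "1 < q"
    using q prime_gt_1_nat by blast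
  have "card (mu (q ^ (e - 1)) :: 'a set) < card (mu (q ^ e) :: 'a set)"
    using card_mu[OF alg_closed] q1 e by (simp add: power_strict_increasing)
  moreover have "finite (mu (q ^ (e - 1)) :: 'a set)"
    using q1 by (simp add: finite_mu)
  ultimately have "\<not> mu (q ^ e) \<subseteq> (mu (q ^ (e - 1)) :: 'a set)"
    by (meson card_mono not_le)
  then obtain z :: 'a where z: "z ^ (q ^ e) = 1" "z ^ (q ^ (e - 1)) \<noteq> 1"
    unfolding mu_def by blast
  have "q ^ e dvd j" if "z ^ j = 1" for j
  proof -
    obtain i where i: "i \<le> e" "gcd (q ^ e) j = q ^ i"
      using divides_primepow_nat[OF q, of "gcd (q ^ e) j" e] by auto
    obtain x y where "q ^ e * x = j * y + gcd (q ^ e) j"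
      using bezout_nat[of "q ^ e" j] q1 by auto
    then have zi: "z ^ (q ^ i) = 1"
      using z(1) that i(2) by (metis mult_1 power_add power_mult power_one)
    have "\<not> i < e"
    proof
      assume "i < e"
      then have "q ^ i dvd q ^ (e - 1)"
        by (intro le_imp_power_dvd) simp
      then obtain t where "q ^ (e - 1) = q ^ i * t" ..
      then show False
        using z(2) zi by (simp add: power_mult)
    qed
    then show ?thesis
      using i by (metis gcd_dvd2 le_antisym not_le)
  qed
  then have "is_primitive_root (q ^ e) z"
    using z(1) unfolding is_primitive_root_def by (auto simp: power_mult)
  then show ?thesis ..
qed

lemma primitive_root_exists:
  assumes alg_closed: "\<forall>q :: 'a::field_char_0 poly. degree q > 0 \<longrightarrow> (\<exists>x. poly q x = 0)"
  shows "0 < n \<Longrightarrow> \<exists>z::'a. is_primitive_root n z"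
proof (induction n rule: less_induct)
  case (less n)
  show ?case
  proof (cases "n = 1")
    case True
    then have "is_primitive_root n (1::'a)"
      by (simp add: is_primitive_root_def)
    then show ?thesis ..
  next
    case False
    then obtain q where q: "prime q" "q dvd n"
      using prime_factor_nat by blast
    define e where "e = multiplicity q n"
    define m where "m = n div q ^ e"
    have n: "n = q ^ e * m"
      unfolding m_def e_def by (simp add: multiplicity_dvd)
    have e: "0 < e"
      using less.prems q unfolding e_def by (simp add: prime_multiplicity_gt_zero_iff)
    have "\<not> q dvd m"
      unfolding m_def e_def using less.prems q(1) by (intro multiplicity_decompose) auto
    then have "coprime (q ^ e) m"
      using q(1) by (simp add: prime_imp_coprime)
    moreover have "1 < q ^ e"
      using e prime_gt_1_nat[OF q(1)] by (metis one_less_power)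
    then have "m < n" "0 < m"
      using n less.prems by auto
    then obtain y :: 'a where "is_primitive_root m y"
      using less.IH by blast
    moreover obtain x :: 'a where "is_primitive_root (q ^ e) x"
      using primitive_root_prime_power_exists[OF alg_closed q(1) e] by blast
    ultimately show ?thesis
      using is_primitive_root_mult n by metis
  qed
qed

lemma prim_root_is_primitive:
  assumes alg_closed: "\<forall>q :: 'a::field_char_0 poly. degree q > 0 \<longrightarrow> (\<exists>x. poly q x = 0)"
    and n: "0 < n"
  shows "is_primitive_root n (prim_root n :: 'a)"
proof -
  obtain z :: 'a where "is_primitive_root n z"
    using primitive_root_exists[OF alg_closed n] by blast
  then have "z ^ n = 1 \<and> (\<forall>m. 0 < m \<and> m < n \<longrightarrow> z ^ m \<noteq> 1)"
    unfolding is_primitive_root_def by (auto dest: dvd_imp_le)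
  then have \<zeta>: "(prim_root n :: 'a) ^ n = 1 \<and> (\<forall>m. 0 < m \<and> m < n \<longrightarrow> (prim_root n :: 'a) ^ m \<noteq> 1)"
    unfolding prim_root_def by (rule someI)
  show ?thesis
    unfolding is_primitive_root_def
  proof (intro allI iffI)
    fix j
    assume "prim_root n ^ j = (1::'a)"
    then have "prim_root n ^ (j mod n) = (1::'a)"
      using power_eq_power_mod \<zeta> by metis
    then show "n dvd j"
      using \<zeta> n by (meson mod_less_divisor mod_0_imp_dvd neq0_conv)
  next
    fix j
    assume "n dvd j"
    then show "prim_root n ^ j = (1::'a)"
      using \<zeta> by (auto simp: power_mult)
  qed
qed

lemma mu_nonzero: "0 < N \<Longrightarrow> x \<in> mu N \<Longrightarrow> x \<noteq> 0"
  unfolding mu_def by (auto simp: power_0_left)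

lemma mu_coset_subset:
  fixes x y :: "'a::field"
  assumes p: "0 < p" and meet: "(\<lambda>u. u * x) ` mu p \<inter> (\<lambda>u. u * y) ` mu p \<noteq> {}"
  shows "(\<lambda>u. u * x) ` mu p \<subseteq> (\<lambda>u. u * y) ` mu p"
proof
  obtain u v where uv: "u \<in> mu p" "v \<in> mu p" "u * x = v * y"
    using meet by auto
  have "u \<noteq> 0"
    using mu_nonzero[OF p uv(1)] .
  fix t assume "t \<in> (\<lambda>u. u * x) ` mu p"
  then obtain s where s: "s \<in> mu p" "t = s * x"
    by blast
  then have "t = (s * v / u) * y" "s * v / u \<in> mu p"
    using uv \<open>u \<noteq> 0\<close> unfolding mu_def by (auto simp: field_simps power_mult_distrib power_divide)
  then show "t \<in> (\<lambda>u. u * y) ` mu p"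
    by blast
qed

lemma roots_of_unity_mult:
  assumes K: "is_subfield K" and "x \<in> roots_of_unity K" "y \<in> roots_of_unity K"
  shows "x * y \<in> roots_of_unity K"
proof -
  obtain m m' where m: "x \<in> K" "0 < m" "x ^ m = 1" and m': "y \<in> K" "0 < m'" "y ^ m' = 1"
    using assms(2,3) unfolding roots_of_unity_def by blast
  have "(x * y) ^ (m * m') = (x ^ m) ^ m' * (y ^ m') ^ m"
    by (simp add: power_mult_distrib mult.commute flip: power_mult)
  then have "(x * y) ^ (m * m') = 1"
    using m(3) m'(3) by simp
  moreover have "x * y \<in> K" "0 < m * m'"
    using m m' subfield_mult[OF K] by auto
  ultimately show ?thesis
    unfolding roots_of_unity_def by blast
qed

lemma primitive_root_in_subfield_dvd_card_roots_of_unity: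
  fixes K :: "'a::field set"
  assumes K: "is_subfield K" and w: "is_primitive_root p w" "w \<in> K" and p: "0 < p"
  shows "p dvd card (roots_of_unity K)"
proof (cases "finite (roots_of_unity K)")
  case False
  then show ?thesis by simp
next
  case True
  define R where "R = roots_of_unity K"
  define coset where "coset x = (\<lambda>u. u * x) ` mu p" for x :: 'a
  have "mu p \<subseteq> R"
  proof
    fix u :: 'a assume u: "u \<in> mu p"
    then obtain j where "u = w ^ j"
      using mu_eq_powers[OF w(1) p] by blast
    then have "u \<in> K"
      using subfield_power[OF K w(2)] by simp
    then show "u \<in> R"
      using u p unfolding R_def roots_of_unity_def mu_def by blast
  qed
  then have "coset x \<subseteq> R" if "x \<in> R" for x
    unfolding coset_def R_def using roots_of_unity_mult[OF K] that by (auto simp: R_def)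
  moreover have "x \<in> coset x" for x
    unfolding coset_def mu_def by (simp add: image_iff exI[of _ 1])
  ultimately have R_eq: "R = \<Union> (coset ` R)"
    by blast
  have "card (coset x) = p" if "x \<in> R" for x
  proof -
    have "x \<noteq> 0"
      using that unfolding R_def roots_of_unity_def by (auto simp: power_0_left)
    then have "inj_on (\<lambda>u. u * x) (mu p)"
      by (auto intro: inj_onI)
    then show ?thesis
      unfolding coset_def using card_image card_mu_primitive_root[OF w(1) p] by metis
  qed
  moreover have "coset x = coset y" if "coset x \<inter> coset y \<noteq> {}" for x y
    using mu_coset_subset[OF p] that unfolding coset_def by (metis Int_commute subset_antisym)
  ultimately have "p dvd card (\<Union> (coset ` R))"
    using True R_eq by (intro dvd_partition) (auto simp: R_def)
  then show ?thesis
    using R_eq R_def by simp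
qed

section \<open>Polynomials over a subfield and simple extensions\<close>

definition poly_over :: "'a::field set \<Rightarrow> 'a poly \<Rightarrow> bool" where
  "poly_over K g \<longleftrightarrow> (\<forall>i. coeff g i \<in> K)"

definition is_minpoly :: "'a::field set \<Rightarrow> 'a \<Rightarrow> 'a poly \<Rightarrow> bool" where
  "is_minpoly K z f \<longleftrightarrow> poly_over K f \<and> lead_coeff f = 1 \<and> poly f z = 0 \<and>
     (\<forall>h. poly_over K h \<and> h \<noteq> 0 \<and> poly h z = 0 \<longrightarrow> degree f \<le> degree h)"

definition simple_ext :: "'a::field set \<Rightarrow> 'a \<Rightarrow> 'a set" where
  "simple_ext K z = (\<lambda>g. poly g z) ` {g. poly_over K g}"

context
  fixes K :: "'a::field set"
  assumes K: "is_subfield K"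
begin

lemma poly_over_0 [simp]: "poly_over K 0"
  by (simp add: poly_over_def subfield_zero[OF K])

lemma poly_over_const: "c \<in> K \<Longrightarrow> poly_over K [:c:]"
  by (simp add: poly_over_def coeff_pCons subfield_zero[OF K] split: nat.split)

lemma poly_over_1 [simp]: "poly_over K 1"
  using poly_over_const[OF subfield_one[OF K]] by (simp add: one_pCons)

lemma poly_over_pCons_iff: "poly_over K (pCons c g) \<longleftrightarrow> c \<in> K \<and> poly_over K g"
  unfolding poly_over_def by (metis coeff_pCons_0 coeff_pCons_Suc not0_implies_Suc coeff_pCons)

lemma poly_over_add: "poly_over K f \<Longrightarrow> poly_over K g \<Longrightarrow> poly_over K (f + g)"
  by (simp add: poly_over_def subfield_add[OF K])

lemma poly_over_uminus: "poly_over K f \<Longrightarrow> poly_over K (- f)"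
  by (simp add: poly_over_def subfield_uminus[OF K])

lemma poly_over_diff: "poly_over K f \<Longrightarrow> poly_over K g \<Longrightarrow> poly_over K (f - g)"
  by (simp add: poly_over_def subfield_diff[OF K])

lemma poly_over_mult: "poly_over K f \<Longrightarrow> poly_over K g \<Longrightarrow> poly_over K (f * g)"
  unfolding poly_over_def coeff_mult by (auto intro!: subfield_sum[OF K] subfield_mult[OF K])

lemma poly_over_smult: "c \<in> K \<Longrightarrow> poly_over K g \<Longrightarrow> poly_over K (smult c g)"
  by (simp add: poly_over_def subfield_mult[OF K])

lemma poly_over_monom: "c \<in> K \<Longrightarrow> poly_over K (monom c n)"
  by (simp add: poly_over_def coeff_monom subfield_zero[OF K])

lemma poly_over_X_power_minus_1: "poly_over K (monom 1 n - 1)"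
  by (intro poly_over_diff poly_over_monom poly_over_1 subfield_one[OF K])

lemma poly_in_subfield:
  "poly_over K g \<Longrightarrow> is_subfield F \<Longrightarrow> K \<subseteq> F \<Longrightarrow> z \<in> F \<Longrightarrow> poly g z \<in> F"
  by (induction g) (auto simp: poly_over_pCons_iff intro!: subfield_add subfield_mult subfield_zero)

lemma poly_over_div_mod:
  assumes "poly_over K f" "poly_over K g"
  shows "poly_over K (g div f) \<and> poly_over K (g mod f)"
  using assms(2)
proof (induction "degree g" arbitrary: g rule: less_induct)
  case less
  show ?case
  proof (cases "f = 0 \<or> g = 0 \<or> degree g < degree f")
    case True
    then show ?thesis using less.prems by (auto simp: div_poly_less mod_poly_less)
  next
    case False
    then have f: "f \<noteq> 0" and g: "g \<noteq> 0" and deg: "degree f \<le> degree g" by auto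
    define h where "h = monom (lead_coeff g / lead_coeff f) (degree g - degree f)"
    define g' where "g' = g - h * f"
    have h: "poly_over K h"
      unfolding h_def using assms(1) less.prems
      by (intro poly_over_monom subfield_divide[OF K]) (auto simp: poly_over_def)
    have g': "poly_over K g'"
      unfolding g'_def by (intro poly_over_diff poly_over_mult h assms(1) less.prems)
    have "degree (h * f) = degree g"
      unfolding h_def using f g deg by (simp add: degree_mult_eq degree_monom_eq)
    moreover have "lead_coeff (h * f) = lead_coeff g"
      unfolding h_def using f g by (simp add: lead_coeff_mult degree_monom_eq)
    ultimately have "degree g' \<le> degree g" "coeff g' (degree g) = 0"
      unfolding g'_def by (metis degree_diff_le le_refl, simp)
    then have "g' = 0 \<or> degree g' < degree g"
      by (metis le_neq_implies_less leading_coeff_0_iff)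
    moreover have "g div f = h + g' div f" "g mod f = g' mod f"
      using f div_mult_self1[of f g' h] mod_mult_self1[of g' h f] by (simp_all add: g'_def)
    ultimately show ?thesis
      using less.hyps[of g'] g' h by (auto intro: poly_over_add)
  qed
qed

lemma minpoly_exists:
  assumes "poly_over K h" "h \<noteq> 0" "poly h z = 0"
  shows "\<exists>f. is_minpoly K z f"
proof -
  let ?P = "\<lambda>g. poly_over K g \<and> g \<noteq> 0 \<and> poly g z = 0"
  define g where "g = arg_min degree ?P"
  have g: "?P g" "\<And>h. ?P h \<Longrightarrow> degree g \<le> degree h"
    using arg_min_nat_lemma[of ?P h degree] assms unfolding g_def by auto
  have "lead_coeff g \<in> K"
    using g(1) by (simp add: poly_over_def)
  then have "poly_over K (smult (inverse (lead_coeff g)) g)"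
    using g(1) by (intro poly_over_smult subfield_inverse[OF K]) auto
  then have "is_minpoly K z (smult (inverse (lead_coeff g)) g)"
    using g unfolding is_minpoly_def by auto
  then show ?thesis ..
qed

lemma minpoly_dvd:
  assumes f: "is_minpoly K z f" and h: "poly_over K h" "poly h z = 0"
  shows "f dvd h"
proof -
  have r: "poly_over K (h mod f)"
    using poly_over_div_mod f h(1) unfolding is_minpoly_def by blast
  have "poly (h mod f) z = 0"
    using f h(2) div_mult_mod_eq[of h f] unfolding is_minpoly_def
    by (metis add_0 mult_zero_right poly_add poly_mult)
  then have "h mod f = 0 \<or> degree f \<le> degree (h mod f)"
    using f r unfolding is_minpoly_def by blast
  moreover have "f \<noteq> 0"
    using f unfolding is_minpoly_def by auto
  ultimately have "h mod f = 0"
    using degree_mod_less'[of f h] by linarith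
  then show ?thesis by (simp add: mod_eq_0_iff_dvd)
qed

lemma minpoly_degree_pos: "is_minpoly K z f \<Longrightarrow> 0 < degree f"
  unfolding is_minpoly_def by (metis degree_0_id gr0I one_poly_eq_simps(1) poly_1 zero_neq_one)

lemma minpoly_of_root:
  assumes f: "is_minpoly K z f" and \<rho>: "poly f \<rho> = 0"
  shows "is_minpoly K \<rho> f"
proof -
  have fK: "poly_over K f" and f0: "f \<noteq> 0"
    using f unfolding is_minpoly_def by auto
  obtain f' where f': "is_minpoly K \<rho> f'"
    using minpoly_exists[OF fK f0 \<rho>] by blast
  define q where "q = f div f'"
  have fq: "f = q * f'"
    unfolding q_def using minpoly_dvd[OF f' fK \<rho>] by simp
  have "poly_over K f'"
    using f' unfolding is_minpoly_def by auto
  then have q: "poly_over K q"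
    using poly_over_div_mod[OF _ fK] unfolding q_def by blast
  have q0: "q \<noteq> 0"
    using fq f0 by auto
  have deg: "degree f = degree q + degree f'"
    using fq q0 f0 by (metis degree_mult_eq mult_zero_right)
  have "poly q z = 0 \<or> poly f' z = 0"
    using f fq unfolding is_minpoly_def by simp
  then have "degree f \<le> degree f'"
  proof
    assume "poly q z = 0"
    then have "degree f \<le> degree q"
      using f q q0 unfolding is_minpoly_def by blast
    then show ?thesis
      using deg minpoly_degree_pos[OF f'] by simp
  next
    assume "poly f' z = 0"
    then show ?thesis
      using f f' minpoly_degree_pos[OF f'] unfolding is_minpoly_def by auto
  qed
  then show ?thesis
    using f f' \<rho> unfolding is_minpoly_def by fastforce
qed

lemma minpoly_common_root_iff:
  assumes f: "is_minpoly K z f" and \<rho>: "poly f \<rho> = 0" and g: "poly_over K g"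
  shows "poly g \<rho> = 0 \<longleftrightarrow> poly g z = 0"
  using minpoly_dvd[OF f g] minpoly_dvd[OF minpoly_of_root[OF f \<rho>] g] f \<rho>
  unfolding is_minpoly_def by (metis dvdE mult_eq_0_iff poly_mult)

lemma poly_over_bezout:
  assumes f: "poly_over K f" and g: "poly_over K g" "g \<noteq> 0"
  obtains a b d where "poly_over K a" "poly_over K b" "d = a * g + b * f" "d \<noteq> 0"
    "d dvd f" "d dvd g"
proof -
  define I where "I = {a * g + b * f | a b. poly_over K a \<and> poly_over K b}"
  have I_poly_over: "poly_over K e" if "e \<in> I" for e
    using that f g(1) unfolding I_def by (auto intro!: poly_over_add poly_over_mult)
  have "g = 1 * g + 0 * f" "f = 0 * g + 1 * f"
    by simp_all
  then have "g \<in> I" "f \<in> I"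
    using f g(1) unfolding I_def by fastforce+
  let ?P = "\<lambda>e. e \<in> I \<and> e \<noteq> 0"
  define d where "d = arg_min degree ?P"
  have d: "?P d" "\<And>e. ?P e \<Longrightarrow> degree d \<le> degree e"
    using arg_min_nat_lemma[of ?P g degree] \<open>g \<in> I\<close> g(2) unfolding d_def by auto
  then obtain a b where ab: "d = a * g + b * f" "poly_over K a" "poly_over K b"
    unfolding I_def by blast
  \<comment> \<open>remainders modulo d stay in I, so by minimality they vanish\<close>
  have "d dvd e" if "e \<in> I" for e
  proof -
    obtain a' b' where a'b': "e = a' * g + b' * f" "poly_over K a'" "poly_over K b'"
      using \<open>e \<in> I\<close> unfolding I_def by blast
    have "e mod d = (a' - e div d * a) * g + (b' - e div d * b) * f"
      using div_mult_mod_eq[of e d] ab(1) a'b'(1) by (simp add: algebra_simps)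
    moreover have "poly_over K (e div d)"
      using poly_over_div_mod[OF I_poly_over I_poly_over] d(1) that by blast
    ultimately have "e mod d \<in> I"
      unfolding I_def using ab a'b' by (blast intro: poly_over_diff poly_over_mult)
    then show ?thesis
      using d degree_mod_less'[of d e] by (force simp: mod_eq_0_iff_dvd)
  qed
  then show ?thesis
    using that ab d(1) \<open>g \<in> I\<close> \<open>f \<in> I\<close> by blast
qed

lemma minpoly_inverse_exists:
  assumes f: "is_minpoly K z f" and g: "poly_over K g" "poly g z \<noteq> 0"
  shows "\<exists>a. poly_over K a \<and> poly a z * poly g z = 1"
proof -
  have fK: "poly_over K f"
    using f unfolding is_minpoly_def by auto
  obtain a b d where ab: "poly_over K a" "poly_over K b" and d: "d = a * g + b * f" "d \<noteq> 0"
    and "d dvd f" "d dvd g"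
    using poly_over_bezout[OF fK g(1)] g(2) by (metis poly_0)
  have dK: "poly_over K d"
    unfolding d(1) using ab g(1) fK by (intro poly_over_add poly_over_mult)
  define q where "q = f div d"
  have fq: "f = d * q"
    unfolding q_def using \<open>d dvd f\<close> by simp
  have "poly d z \<noteq> 0"
    using \<open>d dvd g\<close> g(2) by (metis dvdE mult_eq_0_iff poly_mult)
  then have "poly q z = 0" "q \<noteq> 0"
    using f fq unfolding is_minpoly_def by auto
  moreover have "poly_over K q"
    unfolding q_def using poly_over_div_mod[OF dK fK] by blast
  ultimately have "degree f \<le> degree q"
    using f unfolding is_minpoly_def by blast
  then have "degree d = 0"
    using fq d(2) \<open>q \<noteq> 0\<close> degree_mult_eq[of d q] by simp
  then obtain c where c: "d = [:c:]" "c \<noteq> 0"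
    using d(2) by (metis degree_0_id pCons_0_0)
  then have "c \<in> K"
    using dK by (metis coeff_pCons_0 poly_over_def)
  then have "poly_over K (smult (inverse c) a)"
    by (intro poly_over_smult subfield_inverse[OF K] ab(1))
  moreover have "poly (smult (inverse c) a) z * poly g z = 1"
    using arg_cong[OF d(1), of "\<lambda>p. poly p z"] c f unfolding is_minpoly_def by (simp add: field_simps)
  ultimately show ?thesis by blast
qed

lemma subfield_subset_simple_ext: "K \<subseteq> simple_ext K z"
proof
  fix c assume "c \<in> K"
  then have "c = poly [:c:] z" "poly_over K [:c:]"
    by (simp_all add: poly_over_const)
  then show "c \<in> simple_ext K z"
    unfolding simple_ext_def by blast
qed

lemma poly_in_simple_ext: "poly_over K g \<Longrightarrow> poly g z \<in> simple_ext K z"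
  unfolding simple_ext_def by blast

lemma generator_in_simple_ext: "z \<in> simple_ext K z"
  using poly_in_simple_ext[OF poly_over_monom[OF subfield_one[OF K], of 1], of z]
  by (simp add: poly_monom)

lemma simple_ext_least: "is_subfield F \<Longrightarrow> K \<subseteq> F \<Longrightarrow> z \<in> F \<Longrightarrow> simple_ext K z \<subseteq> F"
  unfolding simple_ext_def using poly_in_subfield by blast

lemma simple_ext_subfield:
  assumes f: "is_minpoly K z f"
  shows "is_subfield (simple_ext K z)"
  unfolding is_subfield_def
proof (intro conjI ballI)
  show "0 \<in> simple_ext K z" "1 \<in> simple_ext K z"
    using subfield_subset_simple_ext subfield_zero[OF K] subfield_one[OF K] by auto
  fix x y assume "x \<in> simple_ext K z" "y \<in> simple_ext K z"
  then obtain g h where "poly_over K g" "poly_over K h" "x = poly g z" "y = poly h z"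
    unfolding simple_ext_def by blast
  then show "x + y \<in> simple_ext K z" "x * y \<in> simple_ext K z"
    using poly_in_simple_ext[OF poly_over_add] poly_in_simple_ext[OF poly_over_mult] by auto
next
  fix x assume "x \<in> simple_ext K z"
  then obtain g where g: "poly_over K g" "x = poly g z"
    unfolding simple_ext_def by blast
  then show "- x \<in> simple_ext K z"
    using poly_in_simple_ext[OF poly_over_uminus] by auto
  show "inverse x \<in> simple_ext K z"
  proof (cases "x = 0")
    case True
    then show ?thesis
      using subfield_subset_simple_ext subfield_zero[OF K] by auto
  next
    case False
    then obtain a where "poly_over K a" "poly a z * x = 1"
      using minpoly_inverse_exists[OF f g(1)] g(2) by blast
    then have "inverse x = poly a z"
      by (simp add: inverse_unique mult.commute)
    then show ?thesis
      using poly_in_simple_ext \<open>poly_over K a\<close> by simp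
  qed
qed

lemma gen_field_insert_eq_simple_ext:
  "is_minpoly K z f \<Longrightarrow> gen_field (insert z K) = simple_ext K z"
  by (intro subset_antisym gen_field_least simple_ext_least)
    (use simple_ext_subfield subfield_subset_simple_ext generator_in_simple_ext
      gen_field_subfield gen_field_superset[of "insert z K"] in auto)

lemma field_auts_poly:
  assumes "\<sigma> \<in> field_auts E K" "is_subfield E" "K \<subseteq> E" "x \<in> E" "poly_over K g"
  shows "\<sigma> (poly g x) = poly g (\<sigma> x)"
  using assms(5)
proof (induction g)
  case 0
  then show ?case
    using field_auts_fixed[OF assms(1) subfield_zero[OF K]] by simp
next
  case (pCons c g)
  then have "c \<in> K" "poly_over K g"
    by (simp_all add: poly_over_pCons_iff)
  moreover from this have "c \<in> E" "poly g x \<in> E"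
    using assms(2-4) poly_in_subfield by auto
  ultimately show ?case
    using pCons.IH field_auts_fixed[OF assms(1)] field_auts_add[OF assms(1)]
      field_auts_mult[OF assms(1)] subfield_mult[OF assms(2)] assms(4) by simp
qed

lemma field_auts_simple_ext_eqI:
  assumes f: "is_minpoly K z f"
    and \<sigma>: "\<sigma> \<in> field_auts (simple_ext K z) K" and \<tau>: "\<tau> \<in> field_auts (simple_ext K z) K"
    and "\<sigma> z = \<tau> z"
  shows "\<sigma> = \<tau>"
proof
  fix x
  show "\<sigma> x = \<tau> x"
  proof (cases "x \<in> simple_ext K z")
    case True
    then obtain g where "poly_over K g" "x = poly g z"
      unfolding simple_ext_def by blast
    then show ?thesis
      using field_auts_poly[OF _ simple_ext_subfield[OF f] subfield_subset_simple_ext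
          generator_in_simple_ext] \<sigma> \<tau> \<open>\<sigma> z = \<tau> z\<close> by metis
  next
    case False
    then show ?thesis
      using field_auts_outside \<sigma> \<tau> by metis
  qed
qed

lemma field_auts_simple_ext_exists:
  assumes f: "is_minpoly K z f" and \<rho>: "poly f \<rho> = 0"
    and same_ext: "simple_ext K \<rho> = simple_ext K z"
  shows "\<exists>\<sigma>\<in>field_auts (simple_ext K z) K. \<sigma> z = \<rho>"
proof -
  define E where "E = simple_ext K z"
  have conj_eq_iff: "poly g \<rho> = poly h \<rho> \<longleftrightarrow> poly g z = poly h z"
    if "poly_over K g" "poly_over K h" for g h
    using minpoly_common_root_iff[OF f \<rho> poly_over_diff[OF that]] by simp
  define \<sigma> where
    "\<sigma> x = (if x \<in> E then poly (SOME g. poly_over K g \<and> poly g z = x) \<rho> else x)" for x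
  have \<sigma>_poly: "\<sigma> (poly g z) = poly g \<rho>" if g: "poly_over K g" for g
  proof -
    have "\<exists>g'. poly_over K g' \<and> poly g' z = poly g z"
      using g by blast
    then have "poly_over K (SOME g'. poly_over K g' \<and> poly g' z = poly g z) \<and>
        poly (SOME g'. poly_over K g' \<and> poly g' z = poly g z) z = poly g z"
      by (rule someI_ex)
    then show ?thesis
      using conj_eq_iff g poly_in_simple_ext unfolding \<sigma>_def E_def by auto
  qed
  have "\<sigma> ` E = (\<lambda>g. poly g \<rho>) ` {g. poly_over K g}"
    unfolding E_def simple_ext_def image_image using \<sigma>_poly by simp
  then have "bij_betw \<sigma> E E"
    unfolding bij_betw_def inj_on_def E_def simple_ext_def
    using same_ext \<sigma>_poly conj_eq_iff by (auto simp: simple_ext_def)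
  moreover have "\<sigma> (x + y) = \<sigma> x + \<sigma> y" "\<sigma> (x * y) = \<sigma> x * \<sigma> y"
    if xy: "x \<in> E" "y \<in> E" for x y
  proof -
    obtain g h where "poly_over K g" "poly_over K h" "x = poly g z" "y = poly h z"
      using xy unfolding E_def simple_ext_def by blast
    then show "\<sigma> (x + y) = \<sigma> x + \<sigma> y" "\<sigma> (x * y) = \<sigma> x * \<sigma> y"
      using \<sigma>_poly[of "g + h"] \<sigma>_poly[of "g * h"] \<sigma>_poly poly_over_add poly_over_mult by auto
  qed
  moreover have "\<sigma> c = c" if "c \<in> K" for c
    using \<sigma>_poly[OF poly_over_const[OF that]] by simp
  moreover have "\<sigma> z = \<rho>"
    using \<sigma>_poly[OF poly_over_monom[OF subfield_one[OF K], of 1]] by (simp add: poly_monom)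
  ultimately show ?thesis
    unfolding field_auts_def E_def[symmetric] using \<sigma>_def by auto
qed

lemma in_subfield_if_constant_on_conjugates:
  assumes alg_closed: "\<forall>q :: 'a poly. degree q > 0 \<longrightarrow> (\<exists>x. poly q x = 0)"
    and f: "is_minpoly K z f" and sep: "rsquarefree f" and g: "poly_over K g"
    and const: "\<And>\<rho>. poly f \<rho> = 0 \<Longrightarrow> poly g \<rho> = c"
  shows "c \<in> K"
proof -
  have fK: "poly_over K f" and f0: "f \<noteq> 0"
    using f unfolding is_minpoly_def by auto
  define u where "u = g mod f - [:c:]"
  have u_roots: "poly u \<rho> = 0" if "poly f \<rho> = 0" for \<rho>
    using const[OF that] that div_mult_mod_eq[of g f] unfolding u_def
    by (metis diff_self mult_zero_right poly_add poly_const_conv poly_diff poly_mult add_0)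
  have "degree u < degree f"
    unfolding u_def using degree_mod_less[OF f0, of g] minpoly_degree_pos[OF f]
    by (metis degree_diff_less degree_pCons_0 diff_0 degree_minus)
  moreover have "degree f \<le> degree u" if "u \<noteq> 0"
  proof -
    have "degree f = card {x. poly f x = 0}"
      using card_roots_rsquarefree[OF alg_closed sep] by simp
    also have "\<dots> \<le> card {x. poly u x = 0}"
      using u_roots by (intro card_mono poly_roots_finite[OF that]) auto
    also have "\<dots> \<le> degree u"
      by (rule card_poly_roots_bound[OF that])
    finally show ?thesis .
  qed
  ultimately have "g mod f = [:c:]"
    unfolding u_def by fastforce
  then show ?thesis
    using poly_over_div_mod[OF fK g] unfolding poly_over_def by (metis coeff_pCons_0)
qed

section \<open>The cyclotomic extension\<close>

context
  fixes n :: nat and z :: 'a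
  assumes z: "is_primitive_root n z" and n: "0 < n"
begin

lemma cyclotomic_minpoly_exists: "\<exists>f. is_minpoly K z f"
proof (rule minpoly_exists)
  show "monom (1::'a) n - 1 \<noteq> 0"
    using X_power_minus_1_nonzero[OF n] .
  show "poly (monom 1 n - 1) z = 0"
    using z unfolding is_primitive_root_def by (simp add: poly_monom)
qed (rule poly_over_X_power_minus_1)

lemma cyclotomic_subfield: "is_subfield (simple_ext K z)"
  using cyclotomic_minpoly_exists simple_ext_subfield by blast

lemma cyclotomic_aut_acts_by_power:
  assumes \<sigma>: "\<sigma> \<in> field_auts (simple_ext K z) K"
  shows "\<exists>b. \<forall>x\<in>mu n. \<sigma> x = x ^ b"
proof -
  have \<sigma>_power: "\<sigma> (z ^ j) = \<sigma> z ^ j" for j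
    using field_auts_power[OF \<sigma> cyclotomic_subfield subfield_one[OF K] generator_in_simple_ext] .
  have "z ^ n = 1"
    using z unfolding is_primitive_root_def by simp
  then have "\<sigma> z ^ n = 1"
    using \<sigma>_power[of n] field_auts_fixed[OF \<sigma> subfield_one[OF K]] by simp
  then obtain b where b: "\<sigma> z = z ^ b"
    using mu_eq_powers[OF z n] unfolding mu_def by blast
  have "\<sigma> x = x ^ b" if "x \<in> mu n" for x
  proof -
    obtain j where "x = z ^ j"
      using \<open>x \<in> mu n\<close> mu_eq_powers[OF z n] by blast
    then show ?thesis
      using \<sigma>_power b by (simp add: mult.commute flip: power_mult)
  qed
  then show ?thesis by blast
qed

lemma cyclotomic_auts_commute:
  assumes \<sigma>: "\<sigma> \<in> field_auts (simple_ext K z) K" and \<tau>: "\<tau> \<in> field_auts (simple_ext K z) K"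
  shows "\<sigma> \<circ> \<tau> = \<tau> \<circ> \<sigma>"
proof -
  obtain f where f: "is_minpoly K z f"
    using cyclotomic_minpoly_exists by blast
  obtain a b where a: "\<forall>x\<in>mu n. \<sigma> x = x ^ a" and b: "\<forall>x\<in>mu n. \<tau> x = x ^ b"
    using cyclotomic_aut_acts_by_power \<sigma> \<tau> by meson
  have "z \<in> mu n" "\<And>c. z ^ c \<in> mu n"
    using z unfolding is_primitive_root_def mu_def by (auto simp: mult.commute simp flip: power_mult)
  then have "(\<sigma> \<circ> \<tau>) z = (\<tau> \<circ> \<sigma>) z"
    using a b by (simp add: mult.commute flip: power_mult)
  then show ?thesis
    using field_auts_simple_ext_eqI[OF f] field_auts_comp \<sigma> \<tau> by blast
qed

lemma cyclotomic_conjugate_aut_exists: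
  assumes f: "is_minpoly K z f" and \<rho>: "poly f \<rho> = 0"
  shows "\<exists>\<sigma>\<in>field_auts (simple_ext K z) K. \<sigma> z = \<rho>"
proof -
  have "\<rho> ^ j = 1 \<longleftrightarrow> z ^ j = 1" for j
    using minpoly_common_root_iff[OF f \<rho> poly_over_X_power_minus_1] by (simp add: poly_monom)
  then have \<rho>_prim: "is_primitive_root n \<rho>"
    using z unfolding is_primitive_root_def by simp
  have "\<rho> \<in> simple_ext K z"
    using mu_eq_powers[OF z n] \<rho>_prim subfield_power[OF cyclotomic_subfield generator_in_simple_ext]
    unfolding is_primitive_root_def mu_def by (metis (mono_tags) dvd_refl imageE mem_Collect_eq)
  moreover have "z \<in> simple_ext K \<rho>"
    using mu_eq_powers[OF \<rho>_prim n] z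
      subfield_power[OF simple_ext_subfield[OF minpoly_of_root[OF f \<rho>]] generator_in_simple_ext]
    unfolding is_primitive_root_def mu_def by (metis (mono_tags) dvd_refl imageE mem_Collect_eq)
  ultimately have "simple_ext K \<rho> = simple_ext K z"
    using simple_ext_least cyclotomic_subfield simple_ext_subfield[OF minpoly_of_root[OF f \<rho>]]
      subfield_subset_simple_ext by (meson subset_antisym)
  then show ?thesis
    using field_auts_simple_ext_exists[OF f \<rho>] by blast
qed

end

end

lemma cyclotomic_minpoly_rsquarefree:
  fixes K :: "'a::field_char_0 set"
  assumes K: "is_subfield K" and z: "is_primitive_root n z" and n: "0 < n"
    and f: "is_minpoly K z f"
  shows "rsquarefree f"
proof -
  have "poly (monom 1 n - 1) z = 0"
    using z unfolding is_primitive_root_def by (simp add: poly_monom)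
  then have "f dvd monom 1 n - 1"
    using minpoly_dvd[OF K f poly_over_X_power_minus_1[OF K]] by blast
  then show ?thesis
    using rsquarefree_dvd[OF rsquarefree_X_power_minus_1[OF n]] by blast
qed

lemma cyclotomic_fixed_power_in_subfield:
  fixes K :: "'a::field_char_0 set"
  assumes alg_closed: "\<forall>q :: 'a poly. degree q > 0 \<longrightarrow> (\<exists>x. poly q x = 0)"
    and K: "is_subfield K" and z: "is_primitive_root n z" and n: "0 < n"
    and fixed: "\<forall>\<sigma>\<in>field_auts (simple_ext K z) K. \<sigma> (z ^ m) = z ^ m"
  shows "z ^ m \<in> K"
proof -
  obtain f where f: "is_minpoly K z f"
    using cyclotomic_minpoly_exists[OF K z n] by blast
  have "poly (monom 1 m) \<rho> = z ^ m" if \<rho>: "poly f \<rho> = 0" for \<rho>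
  proof -
    obtain \<sigma> where \<sigma>: "\<sigma> \<in> field_auts (simple_ext K z) K" "\<sigma> z = \<rho>"
      using cyclotomic_conjugate_aut_exists[OF K z n f \<rho>] by blast
    then have "\<sigma> (z ^ m) = \<rho> ^ m"
      using field_auts_power[OF \<sigma>(1) cyclotomic_subfield[OF K z n] subfield_one[OF K]
          generator_in_simple_ext[OF K]] by simp
    then show ?thesis
      using fixed \<sigma>(1) by (metis poly_monom mult_1)
  qed
  then show ?thesis
    using in_subfield_if_constant_on_conjugates[OF K alg_closed f
        cyclotomic_minpoly_rsquarefree[OF K z n f] poly_over_monom[OF K subfield_one[OF K]]]
    by blast
qed

lemma cyclotomic_aut_nontrivial_mod_p:
  fixes K :: "'a::field_char_0 set"
  assumes alg_closed: "\<forall>q :: 'a poly. degree q > 0 \<longrightarrow> (\<exists>x. poly q x = 0)"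
    and K: "is_subfield K" and z: "is_primitive_root n z" and n: "0 < n"
    and p: "prime p" "p dvd n" and not_dvd: "\<not> p dvd card (roots_of_unity K)"
  shows "\<exists>\<sigma>\<in>field_auts (simple_ext K z) K. \<exists>a>0. (\<forall>x\<in>mu n. \<sigma> x = x ^ a) \<and> \<not> p dvd a - 1"
proof -
  define m where "m = n div p"
  have nm: "n = p * m" and "0 < m"
    using p(2) n unfolding m_def by auto
  define w where "w = z ^ m"
  have w: "is_primitive_root p w"
    using z \<open>0 < m\<close> unfolding is_primitive_root_def w_def nm by (simp flip: power_mult)
  then have "w \<notin> K"
    using primitive_root_in_subfield_dvd_card_roots_of_unity[OF K] not_dvd prime_gt_0_nat[OF p(1)]
    by blast
  then obtain \<sigma> where \<sigma>: "\<sigma> \<in> field_auts (simple_ext K z) K" "\<sigma> w \<noteq> w"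
    using cyclotomic_fixed_power_in_subfield[OF alg_closed K z n] unfolding w_def by blast
  obtain b where b: "\<forall>x\<in>mu n. \<sigma> x = x ^ b"
    using cyclotomic_aut_acts_by_power[OF K z n \<sigma>(1)] by blast
  \<comment> \<open>shifting the exponent by n makes it positive without changing the action\<close>
  define a where "a = b + n"
  have a: "\<forall>x\<in>mu n. \<sigma> x = x ^ a"
    using b unfolding a_def mu_def by (simp add: power_add)
  have "w \<in> mu n"
    using w unfolding mu_def nm is_primitive_root_def by simp
  then have "w ^ a \<noteq> w"
    using a \<sigma>(2) by simp
  moreover have "w ^ a = w" if "p dvd a - 1"
  proof -
    from that obtain t where "a - 1 = p * t" ..
    then have "a = 1 + p * t"
      using n unfolding a_def by linarith
    moreover have "w ^ p = 1"
      using w unfolding is_primitive_root_def by simp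
    ultimately show ?thesis
      by (simp add: power_add power_mult)
  qed
  ultimately show ?thesis
    using \<sigma>(1) a n unfolding a_def by auto
qed

lemma cyclotomic_aut_invertible_on_mu_prime_power:
  fixes K :: "'a::field_char_0 set"
  assumes alg_closed: "\<forall>q :: 'a poly. degree q > 0 \<longrightarrow> (\<exists>x. poly q x = 0)"
    and K: "is_subfield K" and z: "is_primitive_root n z" and n: "0 < n"
    and p: "prime p" and not_dvd: "\<not> p dvd card (roots_of_unity K)"
  defines "k \<equiv> multiplicity p n"
  shows "\<exists>\<sigma>\<in>field_auts (simple_ext K z) K. \<exists>a>0.
    (\<forall>x\<in>mu (p ^ k). \<sigma> x = x ^ a) \<and> coprime (a - 1) (p ^ k)"
proof (cases "p dvd n")
  case True
  then obtain \<sigma> a where "\<sigma> \<in> field_auts (simple_ext K z) K" "\<forall>x\<in>mu n. \<sigma> x = x ^ a" "0 < a"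
    "\<not> p dvd a - 1"
    using cyclotomic_aut_nontrivial_mod_p[OF alg_closed K z n p] not_dvd by blast
  moreover have "mu (p ^ k) \<subseteq> (mu n :: 'a set)"
    unfolding k_def by (intro mu_subset_of_dvd multiplicity_dvd)
  moreover from calculation have "coprime (a - 1) (p ^ k)"
    using p by (simp add: prime_imp_coprime coprime_commute)
  ultimately show ?thesis
    by blast
next
  case False
  then have "k = 0"
    unfolding k_def by (simp add: not_dvd_imp_multiplicity_0)
  then show ?thesis
    using id_in_field_auts by (intro bexI[of _ id] exI[of _ 1]) auto
qed

lemma Gal_n_eq_field_auts_simple_ext:
  fixes K :: "'a::field_char_0 set"
  assumes alg_closed: "\<forall>q :: 'a poly. degree q > 0 \<longrightarrow> (\<exists>x. poly q x = 0)"
    and K: "is_subfield K" and n: "0 < n"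
  shows "Gal_n K n = field_auts (simple_ext K (prim_root n)) K"
  using gen_field_insert_eq_simple_ext[OF K]
    cyclotomic_minpoly_exists[OF K prim_root_is_primitive[OF alg_closed n] n]
  unfolding Gal_n_def by metis

section \<open>Vanishing of the first cohomology\<close>

lemma coprime_exponent_invertible_on_mu:
  assumes "coprime e N"
  obtains c where "\<And>x :: 'a::field. x \<in> mu N \<Longrightarrow> x ^ (e * c) = x"
proof -
  obtain c where c: "[e * c = 1] (mod N)"
    using cong_solve_coprime_nat[OF assms] by auto
  have "x ^ (e * c) = x" if "x \<in> mu N" for x :: 'a
    using power_eq_power_mod[of x N "e * c"] power_eq_power_mod[of x N 1] that c
    unfolding mu_def cong_def by simp
  then show ?thesis
    using that by blast
qed

text \<open>A special case of Sah's lemma.\<close>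

lemma H1_zero_mu_if_central_power_action:
  fixes G :: "('a::field \<Rightarrow> 'a) set"
  assumes N: "0 < N"
    and G_action: "\<forall>\<tau>\<in>G. \<exists>b. \<forall>x\<in>mu N. \<tau> x = x ^ b"
    and \<sigma>: "\<sigma> \<in> G" "\<forall>\<tau>\<in>G. \<sigma> \<circ> \<tau> = \<tau> \<circ> \<sigma>" "\<forall>x\<in>mu N. \<sigma> x = x ^ a"
    and a: "0 < a" "coprime (a - 1) N"
  shows "H1_zero G (mu N)"
  unfolding H1_zero_def
proof (intro allI impI)
  fix h
  assume "(\<forall>\<tau>\<in>G. h \<tau> \<in> mu N) \<and> (\<forall>\<tau>\<in>G. \<forall>\<tau>'\<in>G. h (\<tau> \<circ> \<tau>') = h \<tau> * \<tau> (h \<tau>'))"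
  then have h_mu: "\<And>\<tau>. \<tau> \<in> G \<Longrightarrow> h \<tau> \<in> mu N"
    and cocycle: "\<And>\<tau> \<tau>'. \<tau> \<in> G \<Longrightarrow> \<tau>' \<in> G \<Longrightarrow> h (\<tau> \<circ> \<tau>') = h \<tau> * \<tau> (h \<tau>')"
    by auto
  obtain c where a_inverse: "\<And>x :: 'a. x \<in> mu N \<Longrightarrow> x ^ ((a - 1) * c) = x"
    using coprime_exponent_invertible_on_mu[OF a(2)] by blast
  define s where "s = h \<sigma>"
  have s: "s \<in> mu N" "s \<noteq> 0"
    unfolding s_def using h_mu[OF \<sigma>(1)] mu_nonzero[OF N] by auto
  then have "s ^ c \<in> mu N"
    using mu_power_closed by blast
  have "h \<tau> = \<tau> (s ^ c) / s ^ c" if \<tau>: "\<tau> \<in> G" for \<tau>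
  proof -
    define u where "u = h \<tau>"
    have u: "u \<in> mu N" "u \<noteq> 0"
      unfolding u_def using h_mu[OF \<tau>] mu_nonzero[OF N] by auto
    \<comment> \<open>evaluate the cocycle on the commuting product in both orders\<close>
    have "s * u ^ a = u * \<tau> s"
      using cocycle[OF \<sigma>(1) \<tau>] cocycle[OF \<tau> \<sigma>(1)] \<sigma>(2) \<tau> \<sigma>(3) u(1)
      unfolding s_def u_def by metis
    then have "u ^ (a - 1) = \<tau> s / s"
      using a(1) u(2) s(2) by (cases a) (auto simp: field_simps)
    then have "u = (\<tau> s / s) ^ c"
      using a_inverse[OF u(1)] by (simp add: power_mult)
    moreover obtain b where "\<forall>x\<in>mu N. \<tau> x = x ^ b"
      using G_action \<tau> by blast
    then have "\<tau> (s ^ c) = \<tau> s ^ c"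
      using s(1) \<open>s ^ c \<in> mu N\<close> by (simp add: mult.commute flip: power_mult)
    ultimately show ?thesis
      unfolding u_def by (simp add: power_divide)
  qed
  with \<open>s ^ c \<in> mu N\<close> show "\<exists>m\<in>mu N. \<forall>\<tau>\<in>G. h \<tau> = \<tau> m / m"
    by blast
qed

theorem lemma2p5:
  fixes K :: "'a::field_char_0 set" and p n :: nat
  assumes alg_closed: "\<forall>q :: 'a poly. degree q > 0 \<longrightarrow> (\<exists>x. poly q x = 0)"
    and "is_subfield K"
    and "finite_over_Q (K_ab K)"
    and "prime p"
    and "\<not> p dvd card (roots_of_unity K)"
    and "n > 0"
  shows "H1_zero (Gal_n K n) (mu (p ^ multiplicity p n))"
proof -
  note K = \<open>is_subfield K\<close> and p = \<open>prime p\<close> and n = \<open>n > 0\<close>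
  define z :: 'a where "z = prim_root n"
  define k where "k = multiplicity p n"
  have z: "is_primitive_root n z"
    unfolding z_def using prim_root_is_primitive[OF alg_closed n] .
  have G: "Gal_n K n = field_auts (simple_ext K z) K"
    unfolding z_def using Gal_n_eq_field_auts_simple_ext[OF alg_closed K n] .
  have "mu (p ^ k) \<subseteq> (mu n :: 'a set)"
    unfolding k_def by (intro mu_subset_of_dvd multiplicity_dvd)
  then have "\<forall>\<tau>\<in>Gal_n K n. \<exists>b. \<forall>x\<in>mu (p ^ k). \<tau> x = x ^ b"
    using cyclotomic_aut_acts_by_power[OF K z n] unfolding G by blast
  moreover obtain \<sigma> a where "\<sigma> \<in> Gal_n K n" "\<forall>x\<in>mu (p ^ k). \<sigma> x = x ^ a"
    "0 < a" "coprime (a - 1) (p ^ k)"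
    using cyclotomic_aut_invertible_on_mu_prime_power[OF alg_closed K z n p]
      \<open>\<not> p dvd card (roots_of_unity K)\<close> unfolding G k_def by blast
  moreover have "\<forall>\<tau>\<in>Gal_n K n. \<sigma> \<circ> \<tau> = \<tau> \<circ> \<sigma>"
    using cyclotomic_auts_commute[OF K z n] \<open>\<sigma> \<in> Gal_n K n\<close> unfolding G by blast
  ultimately show ?thesis
    using H1_zero_mu_if_central_power_action[of "p ^ k"] p unfolding k_def
    by (simp add: prime_gt_0_nat)
qed

end
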